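(* Let $\boldsymbol{u}^\star\in\mathbb{R}^n$ and $f(\boldsymbol{u})=\frac12\|\boldsymbol{u}\boldsymbol{u}^{\mathrm T}-\boldsymbol{u}^\star{\boldsymbol{u}^\star}^{\mathrm T}\|_1$ on $\mathbb{R}^n$. Then every second-order stationary point of $f$ is a global minimizer of $f$.
   Context: $\|\cdot\|_1$ is the entrywise $\ell_1$-norm. $\partial f$ denotes the subdifferential (Fréchet, limiting and Clarke subdifferentials coincide for this $f$). The second subderivative is $d^2f(\boldsymbol{x};\boldsymbol{v})(\boldsymbol{w})=\liminf_{t\searrow0,\ \boldsymbol{w}'\to\boldsymbol{w}}\frac{f(\boldsymbol{x}+t\boldsymbol{w}')-f(\boldsymbol{x})-t\,\boldsymbol{v}^{\mathrm T}\boldsymbol{w}'}{t^2/2}$. A point $\boldsymbol{x}$ is a second-order stationary point of $f$ if $\boldsymbol{0}\in\partial f(\boldsymbol{x})$ and $d^2f(\boldsymbol{x};\boldsymbol{0})(\boldsymbol{w})\ge0$ for all $\boldsymbol{w}\in\mathbb{R}^n$. *)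

theory Defs
  imports "HOL-Analysis.Analysis"
begin

definition rank1_l1_obj :: "real^'n \<Rightarrow> real^'n \<Rightarrow> real" where
  "rank1_l1_obj ustar u =
     (1/2) * (\<Sum>i\<in>UNIV. \<Sum>j\<in>UNIV. \<bar>u$i * u$j - ustar$i * ustar$j\<bar>)"

definition frechet_subdiff :: "('a::real_inner \<Rightarrow> real) \<Rightarrow> 'a \<Rightarrow> 'a set" where
  "frechet_subdiff f x =
     {v. Liminf (at x) (\<lambda>y. ereal ((f y - f x - inner v (y - x)) / norm (y - x))) \<ge> 0}"

definition second_subderiv :: "('a::real_inner \<Rightarrow> real) \<Rightarrow> 'a \<Rightarrow> 'a \<Rightarrow> 'a \<Rightarrow> ereal" where
  "second_subderiv f x v w =
     Liminf (at_right 0 \<times>\<^sub>F nhds w)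
       (\<lambda>(t, w'). ereal ((f (x + t *\<^sub>R w') - f x - t * inner v w') / (t^2 / 2)))"

definition second_order_stationary :: "('a::real_inner \<Rightarrow> real) \<Rightarrow> 'a \<Rightarrow> bool" where
  "second_order_stationary f x \<longleftrightarrow>
     0 \<in> frechet_subdiff f x \<and> (\<forall>w. second_subderiv f x 0 w \<ge> 0)"

end

theory Submission
  imports Defs
begin

text \<open>
  Along a ray \<open>u + t w\<close> every entry \<open>\<bar>u\<^sub>i u\<^sub>j - s\<^sub>i s\<^sub>j\<bar>\<close> of the objective is, for small
  \<open>t > 0\<close>, a quadratic polynomial in \<open>t\<close>. Hence at a second-order stationary point the one-sided
  slope in every direction is nonnegative, and the curvature is nonnegative wherever that slope
  vanishes; only this second-order condition is used. Along the coordinate axes it forces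
  \<open>u\<^sub>k = 0\<close> exactly where \<open>s\<^sub>k = 0\<close>. On the support of \<open>s\<close> it becomes a family of conditions
  on the ratios \<open>m\<^sub>k = u\<^sub>k / s\<^sub>k\<close> with weights \<open>\<bar>s\<^sub>k\<bar>\<close>: every \<open>m\<^sub>k\<close> has a partner with
  \<open>m\<^sub>k m\<^sub>j \<ge> 1\<close>; the largest \<open>\<bar>m\<^sub>k\<bar>\<close> cannot exceed 1, since otherwise the slope conditions at
  it and at its inverse partner add up to something negative; so all \<open>\<bar>m\<^sub>k\<bar> = 1\<close>, and then the
  slope condition reads \<open>m\<^sub>k \<Sum>\<^sub>j \<bar>s\<^sub>j\<bar> m\<^sub>j > 0\<close>, so all \<open>m\<^sub>k\<close> are equal. Thus \<open>u = \<plusminus>s\<close>, a zero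
  of the objective.
\<close>

text \<open>The coefficients of \<open>t\<close> and \<open>t\<^sup>2\<close> in \<open>\<bar>D + t A + t\<^sup>2 B\<bar> - \<bar>D\<bar>\<close> for small \<open>t > 0\<close>.\<close>

definition abs_slope :: "real \<Rightarrow> real \<Rightarrow> real" where
  "abs_slope D A = (if D \<noteq> 0 then sgn D * A else \<bar>A\<bar>)"

definition abs_curv :: "real \<Rightarrow> real \<Rightarrow> real \<Rightarrow> real" where
  "abs_curv D A B = (if D \<noteq> 0 then sgn D * B else if A \<noteq> 0 then sgn A * B else \<bar>B\<bar>)"

lemma abs_slope_pos [simp]: "0 < D \<Longrightarrow> abs_slope D A = A"
  and abs_slope_neg [simp]: "D < 0 \<Longrightarrow> abs_slope D A = - A"
  and abs_slope_zero [simp]: "abs_slope 0 A = \<bar>A\<bar>"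
  by (simp_all add: abs_slope_def)

lemma abs_slope_scale: "abs_slope (c * D) (c * A) = \<bar>c\<bar> * abs_slope D A"
  by (simp add: abs_slope_def sgn_mult abs_mult abs_sgn)

lemma abs_slope_scale_right: "0 \<le> c \<Longrightarrow> abs_slope D (c * A) = c * abs_slope D A"
  by (simp add: abs_slope_def abs_mult)

lemma eventually_abs_eq_sgn_mult:
  fixes f :: "'a \<Rightarrow> real"
  assumes "(f \<longlongrightarrow> L) F" "L \<noteq> 0"
  shows "\<forall>\<^sub>F x in F. \<bar>f x\<bar> = sgn L * f x"
proof (cases "0 < L")
  case True
  from order_tendstoD(1)[OF assms(1) True] show ?thesis
    by eventually_elim (simp add: True)
next
  case False
  with assms(2) have "L < 0" by simp
  from order_tendstoD(2)[OF assms(1) this] show ?thesis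
    by eventually_elim (simp add: \<open>L < 0\<close>)
qed

lemma abs_quadratic_expansion:
  fixes D A B :: real
  shows "\<forall>\<^sub>F t in at_right 0. \<bar>D + t*A + t\<^sup>2*B\<bar> - \<bar>D\<bar> = t * abs_slope D A + t\<^sup>2 * abs_curv D A B"
proof -
  consider "D \<noteq> 0" | "D = 0" "A \<noteq> 0" | "D = 0" "A = 0" by blast
  then show ?thesis
  proof cases
    case 1
    have "((\<lambda>t. D + t*A + t\<^sup>2*B) \<longlongrightarrow> D) (at_right 0)"
      by (auto intro!: tendsto_eq_intros)
    from eventually_abs_eq_sgn_mult[OF this 1] show ?thesis
      by eventually_elim (simp add: abs_slope_def abs_curv_def 1 abs_sgn algebra_simps)
  next
    case 2
    have "((\<lambda>t. A + t*B) \<longlongrightarrow> A) (at_right 0)"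
      by (auto intro!: tendsto_eq_intros)
    from eventually_abs_eq_sgn_mult[OF this \<open>A \<noteq> 0\<close>] eventually_at_right_less
    show ?thesis
    proof eventually_elim
      case (elim t)
      have "t*A + t\<^sup>2*B = t * (A + t*B)"
        by (simp add: power2_eq_square algebra_simps)
      then have "\<bar>t*A + t\<^sup>2*B\<bar> - \<bar>D\<bar> = t * (sgn A * (A + t*B))"
        using elim 2 by (simp add: abs_mult)
      then show ?case
        using 2 by (simp add: abs_slope_def abs_curv_def abs_sgn power2_eq_square algebra_simps)
    qed
  next
    case 3
    then show ?thesis by (simp add: abs_slope_def abs_curv_def abs_mult)
  qed
qed

lemma second_subderiv_ray_lower_bound:
  assumes "0 \<le> second_subderiv f x 0 w" "0 < e"
  shows "\<forall>\<^sub>F t in at_right 0. -e < (f (x + t *\<^sub>R w) - f x) / (t\<^sup>2 / 2)"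
proof -
  let ?q = "\<lambda>(t, w'). ereal ((f (x + t *\<^sub>R w') - f x - t * inner 0 w') / (t\<^sup>2 / 2))"
  have "\<forall>\<^sub>F p in at_right 0 \<times>\<^sub>F nhds w. ereal (-e) < ?q p"
    using assms unfolding second_subderiv_def le_Liminf_iff by (simp add: zero_ereal_def)
  moreover have "filterlim (\<lambda>t. (t, w)) (at_right 0 \<times>\<^sub>F nhds w) (at_right (0::real))"
    by (intro filterlim_Pair filterlim_ident tendsto_const)
  ultimately have "\<forall>\<^sub>F t in at_right 0. ereal (-e) < ?q (t, w)"
    by (rule eventually_compose_filterlim)
  then show ?thesis by simp
qed

lemma quadratic_coeffs_nonneg:
  fixes a b :: real
  assumes "\<And>e. 0 < e \<Longrightarrow> \<forall>\<^sub>F t in at_right 0. -e < (t * a + t\<^sup>2 * b) / (t\<^sup>2 / 2)"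
  shows "0 \<le> a \<and> (a = 0 \<longrightarrow> 0 \<le> b)"
proof
  have pos: "\<forall>\<^sub>F t in at_right 0. 0 < 2 * a + (2 * b + 1) * t"
    using assms[OF zero_less_one] eventually_at_right_less
  proof eventually_elim
    case (elim t)
    then have "t * (- t) < t * (2 * a + 2 * b * t)"
      by (simp add: power2_eq_square field_simps)
    then have "- t < 2 * a + 2 * b * t"
      using elim(2) mult_less_cancel_left_pos by blast
    then show ?case
      by (simp add: algebra_simps)
  qed
  have "((\<lambda>t. 2 * a + (2 * b + 1) * t) \<longlongrightarrow> 2 * a) (at_right 0)"
    by (auto intro!: tendsto_eq_intros)
  then have "0 \<le> 2 * a"
    by (rule tendsto_lowerbound) (use pos in \<open>auto elim: eventually_mono\<close>)
  then show "0 \<le> a" by simp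
  show "a = 0 \<longrightarrow> 0 \<le> b"
  proof (rule impI, rule ccontr)
    assume "a = 0" "\<not> 0 \<le> b"
    then have "0 < - b" by simp
    from assms[OF this] eventually_at_right_less have "\<forall>\<^sub>F t in at_right (0::real). b < 2 * b"
      by eventually_elim (simp add: \<open>a = 0\<close> power2_eq_square)
    then have "b < 2 * b" by simp
    with \<open>\<not> 0 \<le> b\<close> show False by simp
  qed
qed

lemma sosp_quadratic_ray:
  assumes "second_order_stationary f x"
    and "\<forall>\<^sub>F t in at_right 0. f (x + t *\<^sub>R w) - f x = t * a + t\<^sup>2 * b"
  shows "0 \<le> a \<and> (a = 0 \<longrightarrow> 0 \<le> b)"
proof (rule quadratic_coeffs_nonneg)
  fix e :: real
  assume "0 < e"
  with assms(1) have "\<forall>\<^sub>F t in at_right 0. -e < (f (x + t *\<^sub>R w) - f x) / (t\<^sup>2 / 2)"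
    unfolding second_order_stationary_def by (intro second_subderiv_ray_lower_bound) auto
  with assms(2) show "\<forall>\<^sub>F t in at_right 0. -e < (t * a + t\<^sup>2 * b) / (t\<^sup>2 / 2)"
    by eventually_elim simp
qed

definition rank1_l1_slope :: "real^'n \<Rightarrow> real^'n \<Rightarrow> real^'n \<Rightarrow> real" where
  "rank1_l1_slope s u w =
     (1/2) * (\<Sum>i\<in>UNIV. \<Sum>j\<in>UNIV. abs_slope (u$i * u$j - s$i * s$j) (u$i * w$j + w$i * u$j))"

definition rank1_l1_curv :: "real^'n \<Rightarrow> real^'n \<Rightarrow> real^'n \<Rightarrow> real" where
  "rank1_l1_curv s u w =
     (1/2) * (\<Sum>i\<in>UNIV. \<Sum>j\<in>UNIV.
        abs_curv (u$i * u$j - s$i * s$j) (u$i * w$j + w$i * u$j) (w$i * w$j))"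

lemma rank1_l1_obj_ray_expansion:
  "\<forall>\<^sub>F t in at_right 0. rank1_l1_obj s (u + t *\<^sub>R w) - rank1_l1_obj s u
     = t * rank1_l1_slope s u w + t\<^sup>2 * rank1_l1_curv s u w"
proof -
  let ?D = "\<lambda>i j. u$i * u$j - s$i * s$j" and ?A = "\<lambda>i j. u$i * w$j + w$i * u$j"
  have "\<forall>\<^sub>F t in at_right 0. \<forall>i j. \<bar>?D i j + t * ?A i j + t\<^sup>2 * (w$i * w$j)\<bar> - \<bar>?D i j\<bar>
      = t * abs_slope (?D i j) (?A i j) + t\<^sup>2 * abs_curv (?D i j) (?A i j) (w$i * w$j)"
    by (intro eventually_all_finite abs_quadratic_expansion)
  then show ?thesis
  proof eventually_elim
    case (elim t)
    have entry: "(u + t *\<^sub>R w)$i * (u + t *\<^sub>R w)$j - s$i * s$j = ?D i j + t * ?A i j + t\<^sup>2 * (w$i * w$j)"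
      for i j by (simp add: power2_eq_square algebra_simps)
    have "rank1_l1_obj s (u + t *\<^sub>R w) - rank1_l1_obj s u
      = (1/2) * (\<Sum>i\<in>UNIV. \<Sum>j\<in>UNIV. \<bar>?D i j + t * ?A i j + t\<^sup>2 * (w$i * w$j)\<bar> - \<bar>?D i j\<bar>)"
      unfolding rank1_l1_obj_def entry by (simp add: sum_subtractf algebra_simps)
    also have "\<dots> = (1/2) * (\<Sum>i\<in>UNIV. \<Sum>j\<in>UNIV.
        t * abs_slope (?D i j) (?A i j) + t\<^sup>2 * abs_curv (?D i j) (?A i j) (w$i * w$j))"
      using elim by simp
    also have "\<dots> = t * rank1_l1_slope s u w + t\<^sup>2 * rank1_l1_curv s u w"
      unfolding rank1_l1_slope_def rank1_l1_curv_def
      by (simp only: sum.distrib flip: sum_distrib_left) (simp add: algebra_simps)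
    finally show ?case .
  qed
qed

lemma rank1_l1_slope_axis:
  "rank1_l1_slope s u (axis k c) = (\<Sum>j\<in>UNIV. abs_slope (u$k * u$j - s$k * s$j) (c * u$j))"
proof -
  let ?a = "\<lambda>j. abs_slope (u$k * u$j - s$k * s$j) (c * u$j)"
  have entry: "abs_slope (u$i * u$j - s$i * s$j) (u$i * axis k c $ j + axis k c $ i * u$j)
      = (if i = k then ?a j else 0) + (if j = k then ?a i else 0)" for i j
  proof -
    have "u$k * c + c * u$k = 2 * (c * u$k)" by simp
    then show ?thesis
      by (cases "i = k"; cases "j = k") (simp_all add: axis_def abs_slope_def abs_mult mult.commute)
  qed
  have "(\<Sum>i\<in>UNIV. \<Sum>j\<in>UNIV. if i = k then ?a j else 0) = sum ?a UNIV"
    by (subst sum.swap) simp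
  then show ?thesis
    unfolding rank1_l1_slope_def entry by (simp add: sum.distrib)
qed

lemma rank1_l1_curv_axis:
  "rank1_l1_curv s u (axis k c) = abs_curv (u$k * u$k - s$k * s$k) (2 * c * u$k) (c * c) / 2"
proof -
  have entry: "abs_curv (u$i * u$j - s$i * s$j) (u$i * axis k c $ j + axis k c $ i * u$j) (axis k c $ i * axis k c $ j)
      = (if i = k then if j = k then abs_curv (u$k * u$k - s$k * s$k) (2 * c * u$k) (c * c) else 0 else 0)" for i j
    by (cases "i = k"; cases "j = k") (simp_all add: axis_def abs_curv_def mult.assoc)
  show ?thesis
    unfolding rank1_l1_curv_def entry by (subst sum.swap) simp
qed

lemma sosp_rank1_l1_slope_curv:
  assumes "second_order_stationary (rank1_l1_obj s) u"
  shows "0 \<le> rank1_l1_slope s u w \<and> (rank1_l1_slope s u w = 0 \<longrightarrow> 0 \<le> rank1_l1_curv s u w)"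
  using sosp_quadratic_ray[OF assms rank1_l1_obj_ray_expansion] .

lemma sosp_rank1_l1_axis:
  assumes "second_order_stationary (rank1_l1_obj s) u"
  shows "0 \<le> (\<Sum>j\<in>UNIV. abs_slope (u$k * u$j - s$k * s$j) (c * u$j))"
    and "(\<Sum>j\<in>UNIV. abs_slope (u$k * u$j - s$k * s$j) (c * u$j)) = 0
           \<Longrightarrow> 0 \<le> abs_curv (u$k * u$k - s$k * s$k) (2 * c * u$k) (c * c)"
  using sosp_rank1_l1_slope_curv[OF assms, of "axis k c"]
  by (simp_all add: rank1_l1_slope_axis rank1_l1_curv_axis)

lemma sosp_rank1_l1_coord_zero:
  assumes sosp: "second_order_stationary (rank1_l1_obj s) u" and "s$k = 0"
  shows "u$k = 0"
proof (rule ccontr)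
  assume "u$k \<noteq> 0"
  have entry: "abs_slope (u$k * u$j - s$k * s$j) (- sgn (u$k) * u$j) = - \<bar>u$j\<bar>" for j
    using \<open>s$k = 0\<close> \<open>u$k \<noteq> 0\<close> by (cases "u$j = 0") (simp_all add: abs_slope_def sgn_mult abs_sgn)
  have "\<bar>u$k\<bar> \<le> (\<Sum>j\<in>UNIV. \<bar>u$j\<bar>)"
    by (rule member_le_sum) auto
  with \<open>u$k \<noteq> 0\<close> have "(\<Sum>j\<in>UNIV. abs_slope (u$k * u$j - s$k * s$j) (- sgn (u$k) * u$j)) < 0"
    unfolding entry by (simp add: sum_negf)
  with sosp_rank1_l1_axis(1)[OF sosp, of k "- sgn (u$k)"] show False
    by simp
qed

lemma sosp_rank1_l1_coord_nonzero:
  assumes sosp: "second_order_stationary (rank1_l1_obj s) u" and "s$k \<noteq> 0"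
  shows "u$k \<noteq> 0"
proof
  assume "u$k = 0"
  let ?a = "\<lambda>c. \<Sum>j\<in>UNIV. abs_slope (u$k * u$j - s$k * s$j) (c * u$j)"
  have "abs_slope (u$k * u$j - s$k * s$j) (- u$j) = - abs_slope (u$k * u$j - s$k * s$j) (u$j)" for j
  proof (cases "s$j = 0")
    case True
    then show ?thesis using sosp_rank1_l1_coord_zero[OF sosp] by (simp add: abs_slope_def)
  next
    case False
    then show ?thesis using \<open>u$k = 0\<close> \<open>s$k \<noteq> 0\<close> by (simp add: abs_slope_def)
  qed
  then have "?a (-1) = - ?a 1"
    by (simp add: sum_negf)
  moreover have "0 \<le> ?a 1" "0 \<le> ?a (-1)"
    using sosp_rank1_l1_axis(1)[OF sosp] by blast+
  ultimately have "?a 1 = 0" by simp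
  from sosp_rank1_l1_axis(2)[OF sosp this] \<open>u$k = 0\<close>
  have "0 \<le> abs_curv (- (s$k * s$k)) 0 1"
    by simp
  moreover have "0 < s$k * s$k"
    using \<open>s$k \<noteq> 0\<close> by (auto simp: zero_less_mult_iff linorder_neq_iff)
  ultimately show False
    using \<open>s$k \<noteq> 0\<close> by (simp add: abs_curv_def)
qed

lemma abs_slope_ratio:
  fixes uk uj sk sj \<sigma> :: real
  assumes "sk \<noteq> 0" "sj \<noteq> 0"
  shows "\<bar>uk\<bar> * abs_slope (uk * uj - sk * sj) (\<sigma> * sgn uk * uj)
       = \<bar>sk\<bar> * (\<bar>sj\<bar> * abs_slope (uk / sk * (uj / sj) - 1) (\<sigma> * (uk / sk * (uj / sj))))"
proof -
  let ?P = "sk * sj" and ?x = "uk / sk * (uj / sj)"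
  have "\<bar>uk\<bar> * (\<sigma> * sgn uk * uj) = \<sigma> * (sgn uk * \<bar>uk\<bar>) * uj"
    by (simp only: ac_simps)
  also have "\<dots> = \<sigma> * uk * uj"
    by (simp only: sgn_mult_abs)
  also have "\<dots> = ?P * (\<sigma> * ?x)"
    using assms by (simp add: field_simps)
  finally have A: "\<bar>uk\<bar> * (\<sigma> * sgn uk * uj) = ?P * (\<sigma> * ?x)" .
  have D: "uk * uj - sk * sj = ?P * (?x - 1)"
    using assms by (simp add: field_simps)
  have "\<bar>uk\<bar> * abs_slope (uk * uj - sk * sj) (\<sigma> * sgn uk * uj) = abs_slope (?P * (?x - 1)) (?P * (\<sigma> * ?x))"
    by (simp only: D A flip: abs_slope_scale_right[OF abs_ge_zero])
  also have "\<dots> = \<bar>?P\<bar> * abs_slope (?x - 1) (\<sigma> * ?x)"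
    by (rule abs_slope_scale)
  finally show ?thesis
    by (simp only: abs_mult mult.assoc)
qed

text \<open>
  With \<open>p = \<bar>s\<bar>\<close> and \<open>m = u / s\<close> one has \<open>\<bar>u\<^sub>k u\<^sub>j - s\<^sub>k s\<^sub>j\<bar> = p\<^sub>k p\<^sub>j \<bar>m\<^sub>k m\<^sub>j - 1\<bar>\<close>, and
  \<open>ratio_slope p m k \<sigma>\<close> is a positive multiple of the slope of the objective in the direction
  \<open>\<sigma> sgn(u\<^sub>k) e\<^sub>k\<close>, which scales \<open>m\<^sub>k\<close> by \<open>1 + \<sigma> t / \<bar>u\<^sub>k\<bar>\<close>.
\<close>

lemma abs_curv_nonneg_ratio:
  fixes uk sk \<sigma> :: real
  assumes "uk \<noteq> 0" "sk \<noteq> 0" "\<sigma> \<in> {1, -1}"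
    and curv: "0 \<le> abs_curv (uk * uk - sk * sk) (2 * (\<sigma> * \<bar>uk\<bar>)) 1"
  shows "1 < (uk / sk)\<^sup>2 \<or> ((uk / sk)\<^sup>2 = 1 \<and> \<sigma> = 1)"
proof -
  have ratio: "(uk / sk)\<^sup>2 = 1 + (uk * uk - sk * sk) / sk\<^sup>2"
    using \<open>sk \<noteq> 0\<close> by (simp add: field_simps power2_eq_square)
  show ?thesis
  proof (cases "uk * uk - sk * sk = 0")
    case True
    with curv assms(1,3) have "\<sigma> = 1"
      by (auto simp: abs_curv_def sgn_mult)
    with True ratio show ?thesis by simp
  next
    case False
    with curv have "0 < uk * uk - sk * sk"
      by (simp add: abs_curv_def sgn_if split: if_splits)
    with ratio \<open>sk \<noteq> 0\<close> show ?thesis by simp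
  qed
qed

definition ratio_slope :: "('n::finite \<Rightarrow> real) \<Rightarrow> ('n \<Rightarrow> real) \<Rightarrow> 'n \<Rightarrow> real \<Rightarrow> real" where
  "ratio_slope p m k \<sigma> = (\<Sum>j\<in>UNIV. p j * abs_slope (m k * m j - 1) (\<sigma> * (m k * m j)))"

lemma sosp_rank1_l1_ratio_slope:
  assumes sosp: "second_order_stationary (rank1_l1_obj s) u"
    and "s$k \<noteq> 0" and \<sigma>: "\<sigma> \<in> {1, -1}"
  defines "r \<equiv> ratio_slope (\<lambda>j. \<bar>s$j\<bar>) (\<lambda>j. u$j / s$j) k \<sigma>"
  shows "0 \<le> r" and "r = 0 \<Longrightarrow> 1 < (u$k / s$k)\<^sup>2 \<or> ((u$k / s$k)\<^sup>2 = 1 \<and> \<sigma> = 1)"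
proof -
  have "u$k \<noteq> 0"
    using sosp_rank1_l1_coord_nonzero[OF sosp \<open>s$k \<noteq> 0\<close>] .
  define c where "c = \<sigma> * sgn (u$k)"
  define a where "a = (\<Sum>j\<in>UNIV. abs_slope (u$k * u$j - s$k * s$j) (c * u$j))"
  have entry: "\<bar>u$k\<bar> * abs_slope (u$k * u$j - s$k * s$j) (c * u$j)
      = \<bar>s$k\<bar> * (\<bar>s$j\<bar> * abs_slope (u$k / s$k * (u$j / s$j) - 1) (\<sigma> * (u$k / s$k * (u$j / s$j))))"
    for j
    using sosp_rank1_l1_coord_zero[OF sosp, of j] abs_slope_ratio[OF \<open>s$k \<noteq> 0\<close>, of "s$j" "u$k" "u$j" \<sigma>]
    by (cases "s$j = 0") (simp_all add: c_def abs_slope_def)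
  have "\<bar>u$k\<bar> * a = \<bar>s$k\<bar> * r"
    unfolding a_def r_def ratio_slope_def sum_distrib_left entry ..
  then have "a = (\<bar>s$k\<bar> / \<bar>u$k\<bar>) * r"
    using \<open>u$k \<noteq> 0\<close> by (simp add: field_simps)
  moreover have "0 < \<bar>s$k\<bar> / \<bar>u$k\<bar>"
    using \<open>u$k \<noteq> 0\<close> \<open>s$k \<noteq> 0\<close> by simp
  ultimately have "0 \<le> a \<longleftrightarrow> 0 \<le> r" "a = 0 \<longleftrightarrow> r = 0"
    using \<open>u$k \<noteq> 0\<close> \<open>s$k \<noteq> 0\<close> by (simp_all add: zero_le_mult_iff)
  then show "0 \<le> r"
    using sosp_rank1_l1_axis(1)[OF sosp, of k c] by (simp add: a_def)
  assume "r = 0"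
  have "c * c = 1" "2 * c * u$k = 2 * (\<sigma> * \<bar>u$k\<bar>)"
    using \<sigma> \<open>u$k \<noteq> 0\<close> by (auto simp: c_def sgn_if)
  with sosp_rank1_l1_axis(2)[OF sosp, of k c] \<open>r = 0\<close> \<open>a = 0 \<longleftrightarrow> r = 0\<close>
  have "0 \<le> abs_curv (u$k * u$k - s$k * s$k) (2 * (\<sigma> * \<bar>u$k\<bar>)) 1"
    by (simp add: a_def)
  then show "1 < (u$k / s$k)\<^sup>2 \<or> ((u$k / s$k)\<^sup>2 = 1 \<and> \<sigma> = 1)"
    using abs_curv_nonneg_ratio \<open>u$k \<noteq> 0\<close> \<open>s$k \<noteq> 0\<close> \<sigma> by blast
qed

lemma abs_slope_kink_pair:
  fixes x Q :: real
  assumes "\<bar>x\<bar> \<le> Q" "1 < Q"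
  shows "abs_slope (x - 1) (- x) + Q * abs_slope (x / Q - 1) (x / Q) \<le> 0"
proof -
  have "0 < Q" using assms by simp
  consider "x = 1" | "x = Q" | "1 < x" "x < Q" | "x < 1"
    using assms by linarith
  then show ?thesis
  proof cases
    case 1
    with assms show ?thesis by simp
  next
    case 2
    with assms show ?thesis by simp
  next
    case 3
    then have "x / Q < 1" using \<open>0 < Q\<close> by (simp add: divide_less_eq)
    with 3 \<open>0 < Q\<close> show ?thesis by simp
  next
    case 4
    then have "x / Q < 1" using assms \<open>0 < Q\<close> by (simp add: divide_less_eq)
    with 4 \<open>0 < Q\<close> show ?thesis by simp
  qed
qed

text \<open>The conditions of \<open>sosp_rank1_l1_ratio_slope\<close>, for arbitrary weights and ratios.\<close>

locale ratio_stationarity =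
  fixes p m :: "'n::finite \<Rightarrow> real"
  assumes weight_nonneg: "0 \<le> p j"
    and slope_nonneg: "0 < p k \<Longrightarrow> \<sigma> \<in> {1, -1} \<Longrightarrow> 0 \<le> ratio_slope p m k \<sigma>"
    and slope_zero: "0 < p k \<Longrightarrow> \<sigma> \<in> {1, -1} \<Longrightarrow> ratio_slope p m k \<sigma> = 0
                       \<Longrightarrow> 1 < (m k)\<^sup>2 \<or> ((m k)\<^sup>2 = 1 \<and> \<sigma> = 1)"
begin

lemma weighted_sum_cong:
  assumes "\<And>j. 0 < p j \<Longrightarrow> g j = h j"
  shows "(\<Sum>j\<in>UNIV. p j * g j) = (\<Sum>j\<in>UNIV. p j * h j)"
proof (rule sum.cong)
  fix j
  show "p j * g j = p j * h j"
    using assms[of j] weight_nonneg[of j] by (cases "p j = 0") auto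
qed simp

lemma weighted_term_nonpos:
  assumes "0 < p j \<Longrightarrow> g j \<le> 0"
  shows "p j * g j \<le> 0"
  using assms weight_nonneg[of j] by (cases "p j = 0") (auto intro: mult_nonneg_nonpos)

lemma weighted_sum_nonpos:
  assumes "\<And>j. 0 < p j \<Longrightarrow> g j \<le> 0"
  shows "(\<Sum>j\<in>UNIV. p j * g j) \<le> 0"
  using assms weighted_term_nonpos by (intro sum_nonpos) blast

lemma weighted_sum_neg:
  assumes "0 < p k" "\<And>j. 0 < p j \<Longrightarrow> g j < 0"
  shows "(\<Sum>j\<in>UNIV. p j * g j) < 0"
proof -
  have "(\<Sum>j\<in>UNIV. p j * g j) < sum (\<lambda>_. 0) (UNIV :: 'n set)"
  proof (rule sum_strict_mono_ex1)
    show "\<forall>j\<in>UNIV. p j * g j \<le> 0"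
      using assms(2) weighted_term_nonpos less_imp_le by blast
    show "\<exists>j\<in>UNIV. p j * g j < 0"
      using assms by (auto intro: mult_pos_neg)
  qed simp
  then show ?thesis by simp
qed

lemma slope_pos:
  assumes "0 < p k" "\<sigma> \<in> {1, -1}" "(m k)\<^sup>2 < 1 \<or> ((m k)\<^sup>2 \<le> 1 \<and> \<sigma> = -1)"
  shows "0 < ratio_slope p m k \<sigma>"
proof -
  have "ratio_slope p m k \<sigma> \<noteq> 0"
    using slope_zero[OF assms(1,2)] assms(3) by auto
  with slope_nonneg[OF assms(1,2)] show ?thesis
    by simp
qed

lemma ex_partner_ge_1:
  assumes "0 < p k"
  shows "\<exists>j. 0 < p j \<and> 1 \<le> m k * m j"
proof (rule ccontr)
  assume "\<not> ?thesis"
  then have small: "m k * m j < 1" if "0 < p j" for j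
    using that by fastforce
  have "ratio_slope p m k \<sigma> = (\<Sum>j\<in>UNIV. p j * (- \<sigma> * (m k * m j)))" for \<sigma>
    unfolding ratio_slope_def by (rule weighted_sum_cong) (simp add: small)
  then have "ratio_slope p m k 1 = - ratio_slope p m k (-1)"
    by (simp add: sum_negf)
  moreover have "0 \<le> ratio_slope p m k 1" "0 \<le> ratio_slope p m k (-1)"
    using slope_nonneg[OF assms] by simp_all
  ultimately have "ratio_slope p m k 1 = 0"
    by linarith
  moreover have "(m k)\<^sup>2 < 1"
    using small[OF assms] by (simp add: power2_eq_square)
  ultimately show False
    using slope_zero[OF assms, of 1] by simp
qed

lemma ex_inverse_partner_of_max:
  assumes "0 < p k" and max: "\<And>j. 0 < p j \<Longrightarrow> \<bar>m j\<bar> \<le> \<bar>m k\<bar>"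
  shows "\<exists>j. 0 < p j \<and> m k * m j = 1"
proof (rule ccontr)
  assume no_inverse: "\<not> ?thesis"
  have "abs_slope (m k * m j - 1) (- (m k * m j)) < 0" if pj: "0 < p j" for j
  proof -
    obtain l where "0 < p l" and partner: "1 \<le> m j * m l"
      using ex_partner_ge_1[OF pj] by blast
    have "m j * m l \<le> \<bar>m j\<bar> * \<bar>m l\<bar>"
      by (metis abs_ge_self abs_mult)
    also have "\<dots> \<le> \<bar>m j\<bar> * \<bar>m k\<bar>"
      using max[OF \<open>0 < p l\<close>] by (simp add: mult_left_mono)
    finally have "1 \<le> \<bar>m k * m j\<bar>"
      using partner by (simp add: abs_mult mult.commute)
    moreover have "m k * m j \<noteq> 1"
      using no_inverse pj by blast
    ultimately show ?thesis
      by (cases "1 < m k * m j") auto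
  qed
  with assms(1) have "ratio_slope p m k (-1) < 0"
    unfolding ratio_slope_def by (simp add: weighted_sum_neg)
  with slope_nonneg[OF assms(1), of "-1"] show False
    by simp
qed

lemma ex_max_ratio:
  assumes "0 < p k"
  obtains k0 where "0 < p k0" "\<And>j. 0 < p j \<Longrightarrow> \<bar>m j\<bar> \<le> \<bar>m k0\<bar>"
proof -
  let ?R = "Max ((\<lambda>j. \<bar>m j\<bar>) ` {j. 0 < p j})"
  have "?R \<in> (\<lambda>j. \<bar>m j\<bar>) ` {j. 0 < p j}"
    using assms by (intro Max_in) auto
  moreover have "\<bar>m j\<bar> \<le> ?R" if "0 < p j" for j
    using that by (intro Max_ge) auto
  ultimately show ?thesis
    using that by force
qed

lemma slope_pair_nonpos:
  assumes "1 < Q" and bound: "\<And>j. 0 < p j \<Longrightarrow> \<bar>m k * m j\<bar> \<le> Q" and "m l = m k / Q"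
  shows "ratio_slope p m k (-1) + Q * ratio_slope p m l 1 \<le> 0"
proof -
  have "abs_slope (m k * m j - 1) (- (m k * m j)) + Q * abs_slope (m l * m j - 1) (m l * m j) \<le> 0"
    if "0 < p j" for j
    using abs_slope_kink_pair[OF bound[OF that] \<open>1 < Q\<close>] by (simp add: \<open>m l = m k / Q\<close>)
  then have "(\<Sum>j\<in>UNIV. p j * (abs_slope (m k * m j - 1) (- (m k * m j))
        + Q * abs_slope (m l * m j - 1) (m l * m j))) \<le> 0"
    by (rule weighted_sum_nonpos)
  then show ?thesis
    by (simp add: ratio_slope_def algebra_simps sum.distrib sum_distrib_left)
qed

lemma ratio_abs_le_1:
  assumes "0 < p k"
  shows "\<bar>m k\<bar> \<le> 1"
proof (rule ccontr)
  assume "\<not> ?thesis"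
  obtain k0 where "0 < p k0" and max: "\<And>j. 0 < p j \<Longrightarrow> \<bar>m j\<bar> \<le> \<bar>m k0\<bar>"
    using ex_max_ratio[OF assms] by blast
  define Q where "Q = m k0 * m k0"
  have "1 < \<bar>m k0\<bar>"
    using max[OF assms] \<open>\<not> \<bar>m k\<bar> \<le> 1\<close> by linarith
  then have "1 < \<bar>m k0\<bar> * \<bar>m k0\<bar>"
    using less_1_mult by blast
  then have "1 < Q"
    by (simp add: Q_def)
  obtain j1 where "0 < p j1" and inverse: "m k0 * m j1 = 1"
    using ex_inverse_partner_of_max[OF \<open>0 < p k0\<close> max] by blast
  have "m j1 * Q = (m k0 * m j1) * m k0"
    by (simp only: Q_def ac_simps)
  then have m_j1: "m j1 = m k0 / Q"
    using \<open>1 < Q\<close> by (simp add: inverse eq_divide_eq)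
  have "(m j1)\<^sup>2 < 1"
    using \<open>1 < Q\<close> by (simp add: m_j1 Q_def power2_eq_square)
  then have "0 < Q * ratio_slope p m j1 1"
    using \<open>1 < Q\<close> slope_pos[OF \<open>0 < p j1\<close>] by simp
  moreover have "0 \<le> ratio_slope p m k0 (-1)"
    using slope_nonneg[OF \<open>0 < p k0\<close>] by simp
  moreover have "\<bar>m k0 * m j\<bar> \<le> Q" if "0 < p j" for j
  proof -
    have "\<bar>m k0\<bar> * \<bar>m j\<bar> \<le> \<bar>m k0\<bar> * \<bar>m k0\<bar>"
      using max[OF that] abs_ge_zero by (rule mult_left_mono)
    then show ?thesis
      by (simp add: Q_def abs_mult)
  qed
  then have "ratio_slope p m k0 (-1) + Q * ratio_slope p m j1 1 \<le> 0"
    using slope_pair_nonpos[OF \<open>1 < Q\<close> _ m_j1] by blast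
  ultimately show False
    by linarith
qed

lemma ratio_abs_eq_1:
  assumes "0 < p k"
  shows "\<bar>m k\<bar> = 1"
proof -
  obtain j where "0 < p j" "1 \<le> m k * m j"
    using ex_partner_ge_1[OF assms] by blast
  then have "1 \<le> \<bar>m k\<bar> * \<bar>m j\<bar>"
    by (metis abs_ge_self abs_mult order_trans)
  also have "\<dots> \<le> \<bar>m k\<bar>"
    using ratio_abs_le_1[OF \<open>0 < p j\<close>] by (simp add: mult_left_le)
  finally show ?thesis
    using ratio_abs_le_1[OF assms] by simp
qed

lemma ratios_eq:
  assumes "0 < p j" "0 < p k"
  shows "m j = m k"
proof -
  define S where "S = (\<Sum>l\<in>UNIV. p l * m l)"
  have "0 < m i * S" if "0 < p i" for i
  proof -
    have "ratio_slope p m i (-1) = (\<Sum>l\<in>UNIV. p l * (m i * m l))"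
      unfolding ratio_slope_def
    proof (rule weighted_sum_cong)
      fix l
      assume "0 < p l"
      then have "m i * m l = 1 \<or> m i * m l = -1"
        using ratio_abs_eq_1[OF that] ratio_abs_eq_1[of l] by (auto simp: abs_eq_iff')
      then show "abs_slope (m i * m l - 1) (- 1 * (m i * m l)) = m i * m l"
        by auto
    qed
    moreover have "0 < ratio_slope p m i (-1)"
      using slope_pos[OF that, of "-1"] ratio_abs_eq_1[OF that] by (simp add: abs_square_le_1)
    ultimately show ?thesis
      by (simp add: S_def sum_distrib_left ac_simps)
  qed
  then have "0 < m j * S" "0 < m k * S"
    using assms by blast+
  then have "m j \<noteq> - m k"
    by auto
  moreover have "m j = m k \<or> m j = - m k"
    using ratio_abs_eq_1[OF assms(1)] ratio_abs_eq_1[OF assms(2)] by (auto simp: abs_eq_iff')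
  ultimately show ?thesis
    by blast
qed

end

lemma sosp_rank1_l1_eq_or_eq_neg:
  assumes sosp: "second_order_stationary (rank1_l1_obj s) u"
  shows "u = s \<or> u = - s"
proof -
  interpret ratio_stationarity "\<lambda>j. \<bar>s$j\<bar>" "\<lambda>j. u$j / s$j"
    using sosp_rank1_l1_ratio_slope[OF sosp] by unfold_locales auto
  show ?thesis
  proof (cases "s = 0")
    case True
    then have "u = 0"
      using sosp_rank1_l1_coord_zero[OF sosp] by (simp add: vec_eq_iff)
    with True show ?thesis by simp
  next
    case False
    then obtain k where "s$k \<noteq> 0"
      by (auto simp: vec_eq_iff)
    define \<epsilon> where "\<epsilon> = u$k / s$k"
    have "u$j = \<epsilon> * s$j" for j
    proof (cases "s$j = 0")
      case True
      then show ?thesis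
        using sosp_rank1_l1_coord_zero[OF sosp] by simp
    next
      case False
      then have "u$j / s$j = \<epsilon>"
        using ratios_eq[of j k] \<open>s$k \<noteq> 0\<close> by (simp add: \<epsilon>_def)
      with False show ?thesis
        by (simp add: field_simps)
    qed
    then have "u = \<epsilon> *\<^sub>R s"
      by (simp add: vec_eq_iff)
    moreover have "\<bar>\<epsilon>\<bar> = 1"
      using ratio_abs_eq_1[of k] \<open>s$k \<noteq> 0\<close> by (simp add: \<epsilon>_def)
    ultimately show ?thesis
      by (auto simp: abs_eq_iff')
  qed
qed

theorem corollary2:
  fixes ustar u :: "real^'n"
  assumes "second_order_stationary (rank1_l1_obj ustar) u"
  shows "\<forall>y. rank1_l1_obj ustar u \<le> rank1_l1_obj ustar y"
proof -
  have "rank1_l1_obj ustar u = 0"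
    using sosp_rank1_l1_eq_or_eq_neg[OF assms] by (auto simp: rank1_l1_obj_def)
  moreover have "0 \<le> rank1_l1_obj ustar y" for y
    by (simp add: rank1_l1_obj_def sum_nonneg)
  ultimately show ?thesis
    by simp
qed

end
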